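(* Let $\alpha>0$. Suppose $f_1,\dots,f_n:\mathbb{R}^d\to\mathbb{R}$ are convex and $L$-smooth, $r:\mathbb{R}^d\to\mathbb{R}\cup\{\infty\}$ is proper, closed and convex, and $A,B\in\mathbb{R}^{n\times n}$ satisfy the matrix assumptions below. If a point $(\bm{x}^\star,\bm{w}^\star,\bm{u}^\star)\in(\mathbb{R}^{nd})^3$ satisfies $$\bm{w}^\star=\bm{x}^\star-\alpha\nabla F(\bm{x}^\star),\qquad \bm{x}^\star=\mathrm{prox}_{\alpha R}\big(\bm{A}(\bm{w}^\star-\sqrt{\bm{B}}\bm{u}^\star)\big),\qquad \bm{0}=\sqrt{\bm{B}}\big(\bm{w}^\star-\sqrt{\bm{B}}\bm{u}^\star\big),$$ then $\bm{x}^\star=\bm{1}_n\otimes x^\star$ for some $x^\star\in\mathbb{R}^d$, and $x^\star$ solves $\min_{x\in\mathbb{R}^d}\frac1n\sum_{i=1}^n\big[f_i(x)+r(x)\big]$.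
   Context: Notation: for $\bm{x}=\mathrm{col}\{x_1,\dots,x_n\}\in\mathbb{R}^{nd}$ with $x_i\in\mathbb{R}^d$, $F(\bm{x})=\sum_{i=1}^n f_i(x_i)$ and $R(\bm{x})=\sum_{i=1}^n r(x_i)$. For $\alpha>0$, $\mathrm{prox}_{\alpha r}(x)=\arg\min_{s}\{r(s)+\frac{1}{2\alpha}\|s-x\|^2\}$, and $\mathrm{prox}_{\alpha R}$ acts blockwise. $W\in\mathbb{R}^{n\times n}$ is a mixing matrix of an undirected connected graph on $n$ nodes: $W=W^{\sf T}$, $W_{ij}>0$ if $(i,j)$ is an edge, $W_{ij}=0$ if $i\neq j$ and $(i,j)$ is not an edge, and $W\bm{1}=\bm{1}$. Matrices $A,B$ are polynomials in $W$ satisfying: $A^{\sf T}=A$, $A\bm{1}=\bm{1}$, $B\succeq 0$, $\mathrm{null}(B)=\mathrm{span}(\bm{1})$, and $I-A^2-B\succeq 0$. Set $\bm{A}=A\otimes I_d$, $\bm{B}=B\otimes I_d$, and $\sqrt{\bm{B}}=\sqrt{B}\otimes I_d$ where $\sqrt B$ is the positive semidefinite square root of $B$. *)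

theory Defs
  imports "HOL-Analysis.Analysis"
begin

text \<open>Stacked vectors in R^(nd) are represented as elements of real^'d^'n:
  block i (a vector in R^d) is x $ i.  n x n matrices are real^'n^'n.\<close>

text \<open>Action of the Kronecker product M \<otimes> I_d on a stacked vector.\<close>
definition kron_app :: "real^'n^'n \<Rightarrow> real^'d^'n \<Rightarrow> real^'d^'n" where
  "kron_app M x = (\<chi> i. \<Sum>j\<in>UNIV. (M $ i $ j) *\<^sub>R (x $ j))"

definition ones :: "real^'n" where "ones = (\<chi> i. 1)"

definition psd :: "real^'n^'n \<Rightarrow> bool" where
  "psd M \<longleftrightarrow> transpose M = M \<and> (\<forall>x. 0 \<le> x \<bullet> (M *v x))"

primrec mpow :: "real^'n^'n \<Rightarrow> nat \<Rightarrow> real^'n^'n" where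
  "mpow W 0 = mat 1"
| "mpow W (Suc k) = W ** mpow W k"

definition poly_in :: "real^'n^'n \<Rightarrow> real^'n^'n \<Rightarrow> bool" where
  "poly_in M W \<longleftrightarrow> (\<exists>(c::nat \<Rightarrow> real) N. M = (\<Sum>k<N. c k *\<^sub>R mpow W k))"

definition mixing_matrix :: "('n \<Rightarrow> 'n \<Rightarrow> bool) \<Rightarrow> real^'n^'n \<Rightarrow> bool" where
  "mixing_matrix E W \<longleftrightarrow>
     (\<forall>i j. E i j \<longleftrightarrow> E j i) \<and> (\<forall>i. \<not> E i i) \<and>
     (\<forall>i j. E\<^sup>*\<^sup>* i j) \<and>
     transpose W = W \<and>
     (\<forall>i j. E i j \<longrightarrow> W $ i $ j > 0) \<and>
     (\<forall>i j. i \<noteq> j \<and> \<not> E i j \<longrightarrow> W $ i $ j = 0) \<and>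
     W *v ones = ones"

definition proper_fun :: "('a \<Rightarrow> ereal) \<Rightarrow> bool" where
  "proper_fun r \<longleftrightarrow> (\<forall>x. r x \<noteq> -\<infinity>) \<and> (\<exists>x. r x \<noteq> \<infinity>)"

definition closed_fun :: "('a::topological_space \<Rightarrow> ereal) \<Rightarrow> bool" where
  "closed_fun r \<longleftrightarrow> closed {(x, t::real). r x \<le> ereal t}"

definition convex_fun :: "('a::real_vector \<Rightarrow> ereal) \<Rightarrow> bool" where
  "convex_fun r \<longleftrightarrow> (\<forall>x y t. 0 \<le> t \<and> t \<le> 1 \<longrightarrow>
      r ((1 - t) *\<^sub>R x + t *\<^sub>R y) \<le> ereal (1 - t) * r x + ereal t * r y)"

definition prox :: "real \<Rightarrow> ('a::real_normed_vector \<Rightarrow> ereal) \<Rightarrow> 'a \<Rightarrow> 'a" where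
  "prox \<alpha> r v = (THE p. \<forall>s. r p + ereal (norm (p - v)^2 / (2 * \<alpha>))
                              \<le> r s + ereal (norm (s - v)^2 / (2 * \<alpha>)))"

text \<open>Blockwise prox of R(x) = \<Sum>_i r(x_i).\<close>
definition proxR :: "real \<Rightarrow> (real^'d \<Rightarrow> ereal) \<Rightarrow> real^'d^'n \<Rightarrow> real^'d^'n" where
  "proxR \<alpha> r x = (\<chi> i. prox \<alpha> r (x $ i))"

definition gradF :: "('n \<Rightarrow> real^'d \<Rightarrow> real^'d) \<Rightarrow> real^'d^'n \<Rightarrow> real^'d^'n" where
  "gradF g x = (\<chi> i. g i (x $ i))"

end

theory Submission
  imports Defs
begin

text \<open>The third fixed-point equation says that \<open>\<surd>B\<close> annihilates \<open>v = w - \<surd>B u\<close>; hence so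
  does \<open>B\<close>, whose kernel consists of consensus vectors, so all blocks of \<open>v\<close> equal some \<open>v\<^sub>0\<close>.
  As \<open>A\<close> fixes consensus vectors, every block of \<open>x\<close> is \<open>x\<^sub>0 = prox v\<^sub>0\<close>. Summing the first
  equation over the nodes, the term \<open>\<surd>B u\<close> drops out (the columns of \<open>\<surd>B\<close> sum to zero), which
  gives \<open>v\<^sub>0 = x\<^sub>0 - (\<alpha>/n) \<Sum>\<^sub>i \<nabla>f\<^sub>i(x\<^sub>0)\<close>. Thus \<open>x\<^sub>0\<close> is a fixed point of the proximal gradient
  step with step size \<open>\<alpha>\<close> for \<open>(1/n) \<Sum>\<^sub>i f\<^sub>i + r\<close>, and the variational inequality of the prox combined with the gradient
  inequality of the convex \<open>f\<^sub>i\<close> shows that it is a minimiser.\<close>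

lemma convex_funD:
  fixes r :: "'a::real_vector \<Rightarrow> ereal"
  assumes "convex_fun r" "r x \<le> ereal a" "r y \<le> ereal b" "0 \<le> t" "t \<le> 1"
  shows "r ((1 - t) *\<^sub>R x + t *\<^sub>R y) \<le> ereal ((1 - t) * a + t * b)"
proof -
  have "r ((1 - t) *\<^sub>R x + t *\<^sub>R y) \<le> ereal (1 - t) * r x + ereal t * r y"
    using assms unfolding convex_fun_def by blast
  also have "\<dots> \<le> ereal (1 - t) * ereal a + ereal t * ereal b"
    using assms by (intro add_mono ereal_mult_left_mono) auto
  finally show ?thesis by simp
qed

lemma convex_fun_imp_convex_epigraph:
  fixes r :: "'a::real_vector \<Rightarrow> ereal"
  assumes "convex_fun r"
  shows "convex {(x, t). r x \<le> ereal t}"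
  unfolding convex_alt using convex_funD[OF assms] by fastforce

lemma proper_fun_neq_MInfty: "proper_fun r \<Longrightarrow> r x \<noteq> -\<infinity>"
  unfolding proper_fun_def by blast

lemma proper_funE:
  assumes "proper_fun r"
  obtains x a where "r x = ereal a"
  using assms unfolding proper_fun_def by (metis ereal_cases)

lemma proper_closed_convex_affine_minorant:
  fixes r :: "'a::euclidean_space \<Rightarrow> ereal"
  assumes proper: "proper_fun r" and closed: "closed_fun r" and convex: "convex_fun r"
  obtains w c where "\<And>x. ereal (c + w \<bullet> x) \<le> r x"
proof -
  obtain x1 a1 where a1: "r x1 = ereal a1" using proper by (rule proper_funE)
  define epi where "epi = {(x, t::real). r x \<le> ereal t}"
  have "(x1, a1 - 1) \<notin> epi" using a1 by (simp add: epi_def)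
  with separating_hyperplane_closed_point[of epi] obtain w0 \<beta> b
    where below: "w0 \<bullet> x1 + \<beta> * (a1 - 1) < b"
      and above: "\<And>x t. (x, t) \<in> epi \<Longrightarrow> b < w0 \<bullet> x + \<beta> * t"
    using convex_fun_imp_convex_epigraph[OF convex] closed
    unfolding epi_def closed_fun_def by fastforce
  have "b < w0 \<bullet> x1 + \<beta> * a1" using above[of x1 a1] a1 by (simp add: epi_def)
  with below have "\<beta> > 0" by (simp add: algebra_simps)
  have "ereal (b / \<beta> + (- w0 /\<^sub>R \<beta>) \<bullet> x) \<le> r x" for x
  proof (cases "r x")
    case (real t)
    then have "b < w0 \<bullet> x + \<beta> * t" using above[of x t] by (simp add: epi_def)
    with \<open>\<beta> > 0\<close> show ?thesis using real by (simp add: field_simps)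
  qed (use proper_fun_neq_MInfty[OF proper] in auto)
  then show ?thesis by (rule that)
qed

definition is_prox :: "real \<Rightarrow> ('a::real_normed_vector \<Rightarrow> ereal) \<Rightarrow> 'a \<Rightarrow> 'a \<Rightarrow> bool" where
  "is_prox \<alpha> r v p \<longleftrightarrow>
     (\<forall>s. r p + ereal (norm (p - v)^2 / (2 * \<alpha>)) \<le> r s + ereal (norm (s - v)^2 / (2 * \<alpha>)))"

lemma is_prox_finite:
  assumes "proper_fun r" "is_prox \<alpha> r v p"
  obtains a where "r p = ereal a"
proof -
  obtain x a where "r x = ereal a" using assms(1) by (rule proper_funE)
  then have "r p + ereal (norm (p - v)^2 / (2 * \<alpha>)) \<le> ereal (a + norm (x - v)^2 / (2 * \<alpha>))"
    using assms(2) unfolding is_prox_def by (metis plus_ereal.simps(1))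
  then have "r p \<noteq> \<infinity>" by auto
  with proper_fun_neq_MInfty[OF assms(1)] show ?thesis using that by (cases "r p") auto
qed

lemma is_prox_variational_inequality:
  fixes r :: "'a::real_inner \<Rightarrow> ereal"
  assumes "\<alpha> > 0" and proper: "proper_fun r" and convex: "convex_fun r" and prox: "is_prox \<alpha> r v p"
  shows "r p + ereal (((v - p) \<bullet> (y - p)) / \<alpha>) \<le> r y"
proof (cases "r y")
  case (real b)
  obtain a where a: "r p = ereal a" using proper prox by (rule is_prox_finite)
  define h where "h = y - p"
  define d where "d = p - v"
  \<comment> \<open>Compare \<open>p\<close> with the points of the segment from \<open>p\<close> to \<open>y\<close>, then let them tend to \<open>p\<close>.\<close>
  have "2 * \<alpha> * (a - b) - 2 * (d \<bullet> h) \<le> t * (h \<bullet> h)" if t: "0 < t" "t \<le> 1" for t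
  proof -
    define z where "z = (1 - t) *\<^sub>R p + t *\<^sub>R y"
    have zv: "z - v = d + t *\<^sub>R h"
      by (simp add: z_def h_def d_def algebra_simps)
    have "norm (z - v)^2 = norm d ^ 2 + (2 * t * (d \<bullet> h) + t * t * (h \<bullet> h))"
      unfolding zv power2_norm_eq_inner by (simp add: inner_add_left inner_add_right inner_commute)
    then have qz: "norm (z - v)^2 / (2 * \<alpha>)
        = norm d ^ 2 / (2 * \<alpha>) + (2 * t * (d \<bullet> h) + t * t * (h \<bullet> h)) / (2 * \<alpha>)"
      by (simp add: add_divide_distrib)
    have "ereal (a + norm d ^ 2 / (2 * \<alpha>)) \<le> r z + ereal (norm (z - v)^2 / (2 * \<alpha>))"
      using prox a unfolding is_prox_def by (simp add: d_def)
    also have "\<dots> \<le> ereal ((1 - t) * a + t * b) + ereal (norm (z - v)^2 / (2 * \<alpha>))"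
      using a real t unfolding z_def by (intro add_right_mono convex_funD[OF convex]) auto
    finally have "t * (a - b) \<le> (2 * t * (d \<bullet> h) + t * t * (h \<bullet> h)) / (2 * \<alpha>)"
      unfolding qz by (simp add: algebra_simps)
    then have "t * (a - b) * (2 * \<alpha>) \<le> 2 * t * (d \<bullet> h) + t * t * (h \<bullet> h)"
      using \<open>\<alpha> > 0\<close> by (simp add: pos_le_divide_eq)
    then have "t * (2 * \<alpha> * (a - b) - 2 * (d \<bullet> h)) \<le> t * (t * (h \<bullet> h))"
      by (simp add: algebra_simps)
    then show ?thesis using t by simp
  qed
  then have "eventually (\<lambda>t. 2 * \<alpha> * (a - b) - 2 * (d \<bullet> h) \<le> t * (h \<bullet> h)) (at_right 0)"
    unfolding eventually_at_right[OF zero_less_one] by (auto intro!: exI[of _ 1])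
  then have "2 * \<alpha> * (a - b) - 2 * (d \<bullet> h) \<le> 0"
    by (rule tendsto_lowerbound[rotated]) (auto intro!: tendsto_eq_intros)
  then have "a + (- d \<bullet> h) / \<alpha> \<le> b"
    using \<open>\<alpha> > 0\<close> by (simp add: field_simps)
  then show ?thesis using a real by (simp add: d_def h_def)
qed (use proper_fun_neq_MInfty[OF proper] in auto)

lemma is_prox_unique:
  fixes r :: "'a::real_inner \<Rightarrow> ereal"
  assumes "\<alpha> > 0" "proper_fun r" "convex_fun r"
    and p: "is_prox \<alpha> r v p" and q: "is_prox \<alpha> r v q"
  shows "p = q"
proof -
  obtain a where a: "r p = ereal a" using assms(2) p by (rule is_prox_finite)
  obtain b where b: "r q = ereal b" using assms(2) q by (rule is_prox_finite)
  have "a + ((v - p) \<bullet> (q - p)) / \<alpha> \<le> b" "b + ((v - q) \<bullet> (p - q)) / \<alpha> \<le> a"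
    using is_prox_variational_inequality[OF assms(1-3) p, of q]
      is_prox_variational_inequality[OF assms(1-3) q, of p] a b by simp_all
  then have "((v - p) \<bullet> (q - p) + (v - q) \<bullet> (p - q)) / \<alpha> \<le> 0"
    by (simp add: add_divide_distrib)
  moreover have "(v - p) \<bullet> (q - p) + (v - q) \<bullet> (p - q) = (q - p) \<bullet> (q - p)"
    by (simp add: algebra_simps inner_commute)
  ultimately have "(q - p) \<bullet> (q - p) \<le> 0"
    using \<open>\<alpha> > 0\<close> by (simp add: divide_le_0_iff)
  then show ?thesis by (metis eq_iff_diff_eq_0 inner_gt_zero_iff not_le)
qed

lemma square_le_affine_imp_le:
  fixes y a b :: real
  assumes "0 \<le> a" "0 \<le> b" "y^2 \<le> a + b * y"
  shows "y \<le> 1 + a + b"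
proof (cases "y \<le> 1")
  case False
  then have "y * y \<le> (a + b) * y"
    using assms mult_left_mono[of 1 y a] by (simp add: power2_eq_square algebra_simps)
  then show ?thesis using False by simp
qed (use assms in simp)

lemma bounded_between_affine_and_paraboloid:
  fixes w v :: "'a::euclidean_space"
  assumes "\<alpha> > 0"
  shows "bounded {(x, t). c + w \<bullet> x \<le> t \<and> t + norm (x - v)^2 / (2 * \<alpha>) \<le> C}"
    (is "bounded ?K")
proof -
  define R where "R = 1 + 2 * \<alpha> * (\<bar>C - c\<bar> + norm w * norm v) + 2 * \<alpha> * norm w"
  have "x \<in> cball v R \<and> t \<in> {c - norm w * (norm v + R) .. C}" if "(x, t) \<in> ?K" for x t
  proof -
    from that have lower: "c + w \<bullet> x \<le> t" and upper: "t + norm (x - v)^2 / (2 * \<alpha>) \<le> C"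
      by auto
    have "w \<bullet> x = w \<bullet> v + w \<bullet> (x - v)" by (simp add: inner_diff_right)
    moreover have "\<bar>w \<bullet> v\<bar> \<le> norm w * norm v" "\<bar>w \<bullet> (x - v)\<bar> \<le> norm w * norm (x - v)"
      by (simp_all add: Cauchy_Schwarz_ineq2)
    ultimately have "norm (x - v)^2 / (2 * \<alpha>) \<le> \<bar>C - c\<bar> + norm w * norm v + norm w * norm (x - v)"
      using lower upper by linarith
    then have "norm (x - v)^2
        \<le> 2 * \<alpha> * (\<bar>C - c\<bar> + norm w * norm v) + 2 * \<alpha> * norm w * norm (x - v)"
      using \<open>\<alpha> > 0\<close> by (simp add: field_simps)
    then have "norm (x - v) \<le> R"
      unfolding R_def using \<open>\<alpha> > 0\<close> by (intro square_le_affine_imp_le) auto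
    moreover have "\<bar>w \<bullet> x\<bar> \<le> norm w * (norm v + norm (x - v))"
      using Cauchy_Schwarz_ineq2[of w x] norm_triangle_sub[of x v]
      by (metis mult_left_mono norm_ge_zero order_trans)
    moreover have "0 \<le> norm (x - v)^2 / (2 * \<alpha>)" using \<open>\<alpha> > 0\<close> by simp
    ultimately show ?thesis
      using lower upper mult_left_mono[of "norm v + norm (x - v)" "norm v + R" "norm w"]
      by (auto simp: dist_norm norm_minus_commute)
  qed
  then have "?K \<subseteq> cball v R \<times> {c - norm w * (norm v + R) .. C}" by auto
  then show ?thesis
    using bounded_subset[OF bounded_Times[OF bounded_cball bounded_closed_interval]] by blast
qed

lemma is_prox_exists:
  fixes r :: "'a::euclidean_space \<Rightarrow> ereal"
  assumes "\<alpha> > 0" and proper: "proper_fun r" and closed: "closed_fun r" and convex: "convex_fun r"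
  shows "\<exists>p. is_prox \<alpha> r v p"
proof -
  define q where "q x = norm (x - v)^2 / (2 * \<alpha>)" for x
  obtain x1 a1 where a1: "r x1 = ereal a1" using proper by (rule proper_funE)
  obtain w c where minorant: "\<And>x. ereal (c + w \<bullet> x) \<le> r x"
    using proper_closed_convex_affine_minorant[OF proper closed convex] by blast
  define C where "C = a1 + q x1"
  \<comment> \<open>On this slice of the epigraph \<open>t + q x\<close> attains its minimum, since the affine
    minorant makes the slice compact.\<close>
  define K where "K = {(x, t). r x \<le> ereal t \<and> t + q x \<le> C}"
  have "K = {(x, t). r x \<le> ereal t} \<inter> {z. snd z + q (fst z) \<le> C}"
    by (auto simp: K_def)
  moreover have "closed {z. snd z + q (fst z) \<le> C}"
    unfolding q_def using \<open>\<alpha> > 0\<close> by (intro closed_Collect_le continuous_intros) auto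
  moreover have "K \<subseteq> {(x, t). c + w \<bullet> x \<le> t \<and> t + q x \<le> C}"
    using order_trans[OF minorant] by (fastforce simp: K_def)
  ultimately have "compact K"
    using closed bounded_subset[OF bounded_between_affine_and_paraboloid[OF \<open>\<alpha> > 0\<close>]]
    unfolding closed_fun_def q_def by (simp add: compact_eq_bounded_closed closed_Int)
  moreover have "(x1, a1) \<in> K" using a1 by (simp add: K_def C_def)
  moreover have "continuous_on K (\<lambda>z. snd z + q (fst z))"
    unfolding q_def using \<open>\<alpha> > 0\<close> by (intro continuous_intros) auto
  ultimately obtain p tp
    where "(p, tp) \<in> K" and min: "\<And>x t. (x, t) \<in> K \<Longrightarrow> tp + q p \<le> t + q x"
    using continuous_attains_inf[of K "\<lambda>z. snd z + q (fst z)"] by fastforce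
  then have rp: "r p \<le> ereal tp" and tp: "tp + q p \<le> C" by (auto simp: K_def)
  have "r p + ereal (q p) \<le> r s + ereal (q s)" for s
  proof (cases "r s")
    case (real t)
    have "tp + q p \<le> t + q s"
      using min[of s t] tp real by (cases "t + q s \<le> C") (auto simp: K_def)
    then show ?thesis
      using rp real by (metis add_right_mono order_trans plus_ereal.simps(1) ereal_less_eq(3))
  qed (use proper_fun_neq_MInfty[OF proper] in auto)
  then show ?thesis unfolding is_prox_def q_def by blast
qed

lemma prox_is_prox:
  fixes r :: "'a::euclidean_space \<Rightarrow> ereal"
  assumes "\<alpha> > 0" "proper_fun r" "closed_fun r" "convex_fun r"
  shows "is_prox \<alpha> r v (prox \<alpha> r v)"
proof -
  have "\<exists>!p. is_prox \<alpha> r v p"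
    using is_prox_exists[OF assms] is_prox_unique[OF assms(1,2,4)] by blast
  then show ?thesis unfolding prox_def is_prox_def[symmetric] by (rule theI')
qed

lemma convex_on_imp_above_gradient:
  fixes f :: "'a::real_inner \<Rightarrow> real"
  assumes convex: "convex_on UNIV f" and deriv: "(f has_derivative (\<lambda>h. g \<bullet> h)) (at x)"
  shows "f x + g \<bullet> (y - x) \<le> f y"
proof -
  define \<phi> where "\<phi> t = f (x + t *\<^sub>R (y - x))" for t :: real
  have "convex_on UNIV \<phi>"
  proof (rule convex_onI)
    fix u a b :: real assume "0 < u" "u < 1"
    have "x + ((1 - u) *\<^sub>R a + u *\<^sub>R b) *\<^sub>R (y - x)
        = (1 - u) *\<^sub>R (x + a *\<^sub>R (y - x)) + u *\<^sub>R (x + b *\<^sub>R (y - x))"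
      by (simp add: algebra_simps)
    with \<open>0 < u\<close> \<open>u < 1\<close> show "\<phi> ((1 - u) *\<^sub>R a + u *\<^sub>R b) \<le> (1 - u) * \<phi> a + u * \<phi> b"
      unfolding \<phi>_def by (simp add: convex_onD[OF convex])
  qed simp
  have "((\<lambda>t. x + t *\<^sub>R (y - x)) has_derivative (\<lambda>t. t *\<^sub>R (y - x))) (at 0)"
    by (auto intro!: derivative_eq_intros)
  from has_derivative_compose[OF this, of f "\<lambda>h. g \<bullet> h"] deriv
  have "(\<phi> has_field_derivative g \<bullet> (y - x)) (at 0)"
    unfolding \<phi>_def has_field_derivative_def
    by (simp add: o_def mult.commute[of _ "g \<bullet> (y - x)"])
  then have "g \<bullet> (y - x) * (1 - 0) \<le> \<phi> 1 - \<phi> 0"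
    by (intro convex_on_imp_above_tangent[OF \<open>convex_on UNIV \<phi>\<close>]) auto
  then show ?thesis by (simp add: \<phi>_def)
qed

lemma prox_gradient_fixed_point_minimizes:
  fixes f :: "'i::finite \<Rightarrow> 'a::euclidean_space \<Rightarrow> real" and g :: "'i \<Rightarrow> 'a \<Rightarrow> 'a"
  assumes "\<alpha> > 0"
    and deriv: "\<And>i x. (f i has_derivative (\<lambda>h. g i x \<bullet> h)) (at x)"
    and convex_f: "\<And>i. convex_on UNIV (f i)"
    and proper: "proper_fun r" and closed: "closed_fun r" and convex: "convex_fun r"
    and fixed: "x = prox \<alpha> r (x - (\<alpha> / real CARD('i)) *\<^sub>R (\<Sum>i\<in>UNIV. g i x))"
  shows "(\<Sum>i\<in>UNIV. ereal (f i x) + r x) \<le> (\<Sum>i\<in>UNIV. ereal (f i y) + r y)"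
proof -
  define n where "n = real CARD('i)"
  define G where "G = (\<Sum>i\<in>UNIV. g i x)"
  have "n > 0" by (simp add: n_def)
  have prox: "is_prox \<alpha> r (x - (\<alpha> / n) *\<^sub>R G) x"
    using prox_is_prox[OF \<open>\<alpha> > 0\<close> proper closed convex] fixed by (metis G_def n_def)
  obtain a where a: "r x = ereal a" using proper prox by (rule is_prox_finite)
  have vi: "r x + ereal (- (G \<bullet> (y - x)) / n) \<le> r y"
    using is_prox_variational_inequality[OF \<open>\<alpha> > 0\<close> proper convex prox, of y] \<open>\<alpha> > 0\<close>
    by simp
  have gradient: "(\<Sum>i\<in>UNIV. f i x) + G \<bullet> (y - x) \<le> (\<Sum>i\<in>UNIV. f i y)"
    unfolding G_def inner_sum_left sum.distrib[symmetric]
    by (intro sum_mono convex_on_imp_above_gradient deriv convex_f)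
  show ?thesis
  proof (cases "r y")
    case (real b)
    with a have "a - G \<bullet> (y - x) / n \<le> b" using vi by simp
    then have "n * a \<le> n * b + G \<bullet> (y - x)"
      using \<open>n > 0\<close> by (simp add: field_simps)
    with gradient a real show ?thesis
      by (simp add: sum.distrib n_def)
  next
    case PInf
    then have "(\<Sum>i\<in>UNIV. ereal (f i y) + r y) = \<infinity>" by (simp add: sum_Pinfty)
    then show ?thesis by simp
  qed (use proper_fun_neq_MInfty[OF proper] in auto)
qed

lemma kron_app_mult: "kron_app (M ** N) x = kron_app M (kron_app N x)"
proof -
  have "(\<Sum>j\<in>UNIV. (\<Sum>l\<in>UNIV. M $ i $ l * N $ l $ j) *\<^sub>R x $ j)
      = (\<Sum>j\<in>UNIV. \<Sum>l\<in>UNIV. M $ i $ l *\<^sub>R N $ l $ j *\<^sub>R x $ j)" for i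
    by (simp add: scaleR_sum_left)
  also have "\<dots> i = (\<Sum>l\<in>UNIV. \<Sum>j\<in>UNIV. M $ i $ l *\<^sub>R N $ l $ j *\<^sub>R x $ j)" for i
    by (rule sum.swap)
  finally show ?thesis
    by (simp add: kron_app_def matrix_matrix_mult_def scaleR_sum_right)
qed

lemma kron_app_const: "kron_app M (\<chi> j. c) = (\<chi> i. (M *v ones) $ i *\<^sub>R c)"
  by (simp add: kron_app_def matrix_vector_mult_def ones_def scaleR_sum_left)

lemma sum_kron_app:
  "(\<Sum>i\<in>UNIV. kron_app M x $ i) = (\<Sum>j\<in>UNIV. (transpose M *v ones) $ j *\<^sub>R x $ j)"
proof -
  have "(\<Sum>i\<in>UNIV. kron_app M x $ i) = (\<Sum>i\<in>UNIV. \<Sum>j\<in>UNIV. M $ i $ j *\<^sub>R x $ j)"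
    by (simp add: kron_app_def)
  also have "\<dots> = (\<Sum>j\<in>UNIV. \<Sum>i\<in>UNIV. M $ i $ j *\<^sub>R x $ j)"
    by (rule sum.swap)
  finally show ?thesis
    by (simp add: matrix_vector_mult_def transpose_def ones_def scaleR_sum_left)
qed

lemma kron_app_kernel_imp_consensus:
  assumes kernel: "{c. M *v c = 0} \<subseteq> span {ones}" and "kron_app M x = 0"
  shows "\<exists>x0. x = (\<chi> i. x0)"
proof -
  have "x $ i $ k = x $ j $ k" for i j k
  proof -
    define c where "c = (\<chi> l. x $ l $ k)"
    have "M *v c = 0"
      using \<open>kron_app M x = 0\<close>
      by (simp add: kron_app_def matrix_vector_mult_def c_def vec_eq_iff)
    with kernel obtain t where "c = t *\<^sub>R ones" by (auto simp: span_singleton)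
    then show ?thesis by (simp add: c_def ones_def vec_eq_iff)
  qed
  then have "x = (\<chi> i. x $ j)" for j by (simp add: vec_eq_iff)
  then show ?thesis by blast
qed

lemma symmetric_square_kernel:
  fixes S :: "real^'n^'n"
  assumes "transpose S = S" "(S ** S) *v c = 0"
  shows "S *v c = 0"
proof -
  have "(S *v c) \<bullet> (S *v c) = c \<bullet> ((S ** S) *v c)"
    by (metis assms(1) dot_lmul_matrix matrix_vector_mul_assoc transpose_matrix_vector inner_commute)
  then show ?thesis using assms(2) by simp
qed

theorem lemma1:
  fixes \<alpha> L :: real
    and f :: "'n::finite \<Rightarrow> real^'d::finite \<Rightarrow> real"
    and g :: "'n \<Rightarrow> real^'d \<Rightarrow> real^'d"
    and r :: "real^'d \<Rightarrow> ereal"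
    and E :: "'n \<Rightarrow> 'n \<Rightarrow> bool"
    and W A B S :: "real^'n^'n"
    and xs ws us :: "real^'d^'n"
  assumes alpha_pos: "\<alpha> > 0"
    and L_pos: "L > 0"
    and f_grad: "\<And>i x. (f i has_derivative (\<lambda>h. g i x \<bullet> h)) (at x)"
    and f_convex: "\<And>i. convex_on UNIV (f i)"
    and f_smooth: "\<And>i x y. norm (g i x - g i y) \<le> L * norm (x - y)"
    and r_proper: "proper_fun r"
    and r_closed: "closed_fun r"
    and r_convex: "convex_fun r"
    and W_mix: "mixing_matrix E W"
    and A_poly: "poly_in A W"
    and B_poly: "poly_in B W"
    and A_sym: "transpose A = A"
    and A_one: "A *v ones = ones"
    and B_psd: "psd B"
    and B_null: "{v. B *v v = 0} = span {ones}"
    and AB: "psd (mat 1 - A ** A - B)"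
    and S_sqrt: "psd S" "S ** S = B"
    and fix_w: "ws = xs - \<alpha> *\<^sub>R gradF g xs"
    and fix_x: "xs = proxR \<alpha> r (kron_app A (ws - kron_app S us))"
    and fix_u: "0 = kron_app S (ws - kron_app S us)"
  shows "\<exists>x0. (\<forall>i. xs $ i = x0) \<and>
           (\<forall>y. ereal (1 / real CARD('n)) * (\<Sum>i\<in>UNIV. ereal (f i x0) + r x0)
                \<le> ereal (1 / real CARD('n)) * (\<Sum>i\<in>UNIV. ereal (f i y) + r y))"
proof -
  define n where "n = real CARD('n)"
  define v where "v = ws - kron_app S us"
  have S_sym: "transpose S = S" using S_sqrt(1) by (simp add: psd_def)
  have "kron_app B v = 0"
    using fix_u by (simp add: v_def kron_app_mult flip: S_sqrt(2)) (simp add: kron_app_def vec_eq_iff)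
  then obtain v0 where v0: "v = (\<chi> i. v0)"
    using kron_app_kernel_imp_consensus B_null by blast
  define x0 where "x0 = prox \<alpha> r v0"
  have xs: "xs = (\<chi> i. x0)"
    using fix_x A_one by (simp add: v_def[symmetric] v0 kron_app_const proxR_def x0_def ones_def)
  have "S *v ones = 0"
    using symmetric_square_kernel[OF S_sym] B_null S_sqrt(2) span_base[of ones] by blast
  then have "(\<Sum>i\<in>UNIV. kron_app S us $ i) = 0" by (simp add: sum_kron_app S_sym)
  then have "(\<Sum>i\<in>UNIV. v $ i) = (\<Sum>i\<in>UNIV. ws $ i)" by (simp add: v_def sum_subtractf)
  then have "n *\<^sub>R v0 = n *\<^sub>R (x0 - (\<alpha> / n) *\<^sub>R (\<Sum>i\<in>UNIV. g i x0))"
    by (simp add: v0 fix_w xs gradF_def n_def sum_subtractf scaleR_sum_right scaleR_diff_right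
        sum_constant_scaleR del: sum_constant)
  then have "x0 = prox \<alpha> r (x0 - (\<alpha> / n) *\<^sub>R (\<Sum>i\<in>UNIV. g i x0))"
    by (simp add: x0_def n_def)
  then have "(\<Sum>i\<in>UNIV. ereal (f i x0) + r x0) \<le> (\<Sum>i\<in>UNIV. ereal (f i y) + r y)" for y
    unfolding n_def
    by (rule prox_gradient_fixed_point_minimizes[OF alpha_pos f_grad f_convex r_proper r_closed r_convex])
  then show ?thesis using xs by (auto intro!: ereal_mult_left_mono)
qed

end
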